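(* Let $\varphi=\frac{1+\sqrt5}{2}$ and for every integer $m$ let $F_m=\frac{\varphi^m-(-1/\varphi)^m}{\varphi+1/\varphi}$; let $F_0!=1$, $F_n!=F_1\cdots F_n$. For a real constant $a$ define the Golden polynomials $P_0(x)=1$ and, for $n\ge1$, $$P_n(x)=\frac{(x-a)_F^n}{F_n!},\qquad (x-a)_F^n=\prod_{k=0}^{n-1}\big(x-(-1)^k\varphi^{\,n-1-2k}a\big).$$ Then $D_FP_n=P_{n-1}$ for $n\ge1$ (where $D_F$ is the linear operator on polynomials in $x$ with $D_Fx^m=F_mx^{m-1}$, $D_F1=0$), and for every $n\ge1$, respectively $n\ge0$, $$P_{2n}(x)=\frac1{F_{2n}!}\prod_{k=1}^n\Big(x^2-(-1)^{n+k}(F_{2k-1}+2F_{2k-2})xa-a^2\Big),$$ $$P_{2n+1}(x)=\frac{x-(-1)^na}{F_{2n+1}!}\prod_{k=1}^n\Big(x^2-(-1)^{n+k}(F_{2k}+2F_{2k-1})xa+a^2\Big).$$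
   Context: Empty products equal $1$. *)

theory Defs
  imports Complex_Main "HOL-Computational_Algebra.Polynomial"
begin

definition golden :: real where "golden = (1 + sqrt 5) / 2"

definition GF :: "int \<Rightarrow> real" where
  "GF m = (golden powi m - (- 1 / golden) powi m) / (golden + 1 / golden)"

definition GFfact :: "nat \<Rightarrow> real" where
  "GFfact n = (\<Prod>k = 1..n. GF (int k))"

text \<open>The golden derivative: linear operator with D_F x^m = F_m x^(m-1), D_F 1 = 0,
  i.e. coefficient m of D_F p is F_(m+1) times coefficient (m+1) of p.\<close>
definition golden_deriv :: "real poly \<Rightarrow> real poly" where
  "golden_deriv p = Abs_poly (\<lambda>m. GF (int (Suc m)) * coeff p (Suc m))"

definition golden_binom :: "real \<Rightarrow> nat \<Rightarrow> real poly" where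
  "golden_binom a n = (\<Prod>k<n. [: - ((-1) ^ k * golden powi (int n - 1 - 2 * int k) * a), 1 :])"

definition golden_poly :: "real \<Rightarrow> nat \<Rightarrow> real poly" where
  "golden_poly a n = (if n = 0 then 1 else smult (1 / GFfact n) (golden_binom a n))"

end

theory Submission
  imports Defs
begin

text \<open>With \<open>\<psi> = -1/\<phi>\<close>, the golden derivative is the \<open>q\<close>-difference quotient
  \<open>D\<^sub>F p (x) = (p (\<phi> x) - p (\<psi> x)) / ((\<phi> - \<psi>) x)\<close>.  Rescaling the factors of
  \<open>(x - a)\<^sub>F\<^sup>n\<close> by \<open>\<phi>\<close> or by \<open>\<psi>\<close> reproduces, up to a shift of the index, the factors of
  \<open>(x - a)\<^sub>F\<^sup>n\<^sup>-\<^sup>1\<close>; in \<open>p (\<phi> x) - p (\<psi> x)\<close> only \<open>(\<phi>\<^sup>n - \<psi>\<^sup>n) x (x - a)\<^sub>F\<^sup>n\<^sup>-\<^sup>1\<close> survives.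
  For the factorizations, the factors \<open>k\<close> and \<open>n - 1 - k\<close> of \<open>(x - a)\<^sub>F\<^sup>n\<close> carry the
  reciprocal powers \<open>\<phi>\<^sup>e\<close> and \<open>\<phi>\<^sup>-\<^sup>e\<close>; their product is a quadratic whose middle coefficient
  involves \<open>\<phi>\<^sup>e \<plusminus> \<phi>\<^sup>-\<^sup>e\<close>, a Lucas number, which equals \<open>F\<^sub>e + 2 F\<^sub>e\<^sub>-\<^sub>1\<close>.\<close>

lemma golden_gt_1: "golden > 1"
  unfolding golden_def by simp

lemma golden_nonzero: "golden \<noteq> 0"
  using golden_gt_1 by simp

lemma golden_conj: "-1 / golden = (1 - sqrt 5) / 2"
proof -
  have "(1 + sqrt 5) * (1 - sqrt 5) = -4"
    by (simp add: algebra_simps)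
  moreover have "1 + sqrt 5 \<noteq> 0"
    using real_sqrt_ge_zero[of 5] by linarith
  ultimately show ?thesis
    unfolding golden_def by (simp add: field_simps)
qed

lemma golden_plus_inverse: "golden + 1 / golden = sqrt 5"
  using golden_conj unfolding golden_def by (simp add: field_simps)

lemma GF_of_nat: "GF (int k) = (golden ^ k - (-1 / golden) ^ k) / (golden + 1 / golden)"
  unfolding GF_def by simp

lemma GF_pos:
  assumes "k \<ge> 1"
  shows "GF (int k) > 0"
proof -
  have "(-1 / golden) ^ k \<le> \<bar>-1 / golden\<bar> ^ k"
    by (metis abs_ge_self power_abs)
  also have "\<dots> \<le> 1"
    using golden_gt_1 by (intro power_le_one) auto
  also have "1 < golden ^ k"
    using golden_gt_1 assms by (simp add: one_less_power)
  finally show ?thesis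
    unfolding GF_of_nat golden_plus_inverse by simp
qed

lemma GFfact_Suc: "GFfact (Suc n) = GFfact n * GF (int (Suc n))"
  unfolding GFfact_def by (simp add: prod.cl_ivl_Suc)

lemma GFfact_nonzero: "GFfact n \<noteq> 0"
  unfolding GFfact_def using GF_pos by (force simp: prod_zero_iff)

lemma GF_plus_2_GF_pred: "GF m + 2 * GF (m - 1) = golden powi m + (-1 / golden) powi m"
proof -
  define \<psi> where "\<psi> = -1 / golden"
  define X Y where "X = golden powi (m - 1)" and "Y = \<psi> powi (m - 1)"
  have \<psi>_nonzero: "\<psi> \<noteq> 0"
    unfolding \<psi>_def using golden_nonzero by simp
  have powi_m: "golden powi m = X * golden" "\<psi> powi m = Y * \<psi>"
    unfolding X_def Y_def using golden_nonzero \<psi>_nonzero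
    by (simp_all add: power_int_minus_mult)
  have "golden + 2 = sqrt 5 * golden"
    unfolding golden_def by (simp add: algebra_simps)
  moreover have "\<psi> + 2 = - sqrt 5 * \<psi>"
    unfolding \<psi>_def golden_conj by (simp add: field_simps)
  ultimately have "X * (golden + 2) - Y * (\<psi> + 2) = X * (sqrt 5 * golden) - Y * (- sqrt 5 * \<psi>)"
    by simp
  then have key: "X * golden - Y * \<psi> + 2 * (X - Y) = sqrt 5 * (X * golden + Y * \<psi>)"
    by (simp add: algebra_simps)
  have "GF m + 2 * GF (m - 1) = (X * golden - Y * \<psi> + 2 * (X - Y)) / sqrt 5"
    unfolding GF_def golden_plus_inverse \<psi>_def[symmetric] powi_m X_def[symmetric] Y_def[symmetric]
    by (simp add: add_divide_distrib diff_divide_distrib)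
  also have "\<dots> = golden powi m + \<psi> powi m"
    unfolding key powi_m by simp
  finally show ?thesis
    unfolding \<psi>_def .
qed

lemma golden_conj_powi:
  "(-1 / golden) powi m = (if even m then golden powi (-m) else - (golden powi (-m)))"
proof -
  have "-1 / golden = - inverse golden"
    by (simp add: divide_inverse)
  then show ?thesis
    by (simp add: power_int_minus_left power_int_inverse power_int_minus)
qed

lemma coeff_golden_deriv: "coeff (golden_deriv p) m = GF (int (Suc m)) * coeff p (Suc m)"
proof -
  have "coeff (Abs_poly (\<lambda>m. GF (int (Suc m)) * coeff p (Suc m))) =
      (\<lambda>m. GF (int (Suc m)) * coeff p (Suc m))"
    by (rule coeff_Abs_poly[where n = "degree p"]) (simp add: coeff_eq_0)
  then show ?thesis
    unfolding golden_deriv_def by simp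
qed

lemma golden_deriv_smult: "golden_deriv (smult c p) = smult c (golden_deriv p)"
  by (rule poly_eqI) (simp add: coeff_golden_deriv)

lemma golden_deriv_difference_quotient:
  "p \<circ>\<^sub>p [:0, golden:] - p \<circ>\<^sub>p [:0, -1 / golden:] =
    smult (golden + 1 / golden) (pCons 0 (golden_deriv p))"
proof (rule poly_eqI)
  fix m
  show "coeff (p \<circ>\<^sub>p [:0, golden:] - p \<circ>\<^sub>p [:0, -1 / golden:]) m =
      coeff (smult (golden + 1 / golden) (pCons 0 (golden_deriv p))) m"
  proof (cases m)
    case (Suc k)
    have "golden ^ Suc k - (-1 / golden) ^ Suc k = (golden + 1 / golden) * GF (int (Suc k))"
      unfolding GF_of_nat golden_plus_inverse by simp
    then show ?thesis
      unfolding Suc coeff_diff coeff_pcompose_linear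
      by (simp add: coeff_golden_deriv left_diff_distrib[symmetric] del: power_Suc)
  qed simp
qed

lemma poly_golden_binom:
  "poly (golden_binom a n) x = (\<Prod>k<n. x - (-1) ^ k * golden powi (int n - 1 - 2 * int k) * a)"
  unfolding golden_binom_def poly_prod by simp

lemma poly_golden_binom_dilations:
  "poly (golden_binom a (Suc n)) (golden * x) - poly (golden_binom a (Suc n)) (-1 / golden * x) =
    (golden ^ Suc n - (-1 / golden) ^ Suc n) * x * poly (golden_binom a n) x"
proof -
  define \<psi> where "\<psi> = -1 / golden"
  define \<beta> where "\<beta> k = (-1) ^ k * golden powi (int (Suc n) - 1 - 2 * int k) * a" for k
  define \<gamma> where "\<gamma> k = (-1) ^ k * golden powi (int n - 1 - 2 * int k) * a" for k
  define G where "G = (\<Prod>k<n. x - \<gamma> k)"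
  have shift_golden: "golden * x - \<beta> k = golden * (x - \<gamma> k)" for k
  proof -
    have "int (Suc n) - 1 - 2 * int k = (int n - 1 - 2 * int k) + 1"
      by simp
    then have "golden powi (int (Suc n) - 1 - 2 * int k) = golden * golden powi (int n - 1 - 2 * int k)"
      by (metis golden_nonzero power_int_add_1')
    then show ?thesis
      unfolding \<beta>_def \<gamma>_def by (simp add: algebra_simps)
  qed
  have shift_conj: "\<psi> * x - \<beta> (Suc k) = \<psi> * (x - \<gamma> k)" for k
  proof -
    have "int n - 1 - 2 * int k = (int (Suc n) - 1 - 2 * int (Suc k)) + 1"
      by simp
    then have "golden powi (int n - 1 - 2 * int k) = golden * golden powi (int (Suc n) - 1 - 2 * int (Suc k))"
      by (metis golden_nonzero power_int_add_1')
    then show ?thesis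
      unfolding \<beta>_def \<gamma>_def \<psi>_def using golden_nonzero by (simp add: field_simps)
  qed
  have last_factor: "golden ^ n * \<beta> n = (-1) ^ n * a"
    unfolding \<beta>_def using golden_nonzero by (simp add: power_int_minus)
  have first_factor: "\<psi> ^ n * \<beta> 0 = (-1) ^ n * a"
  proof -
    have "\<psi> ^ n * golden ^ n = (-1) ^ n"
      unfolding \<psi>_def using golden_nonzero by (simp flip: power_mult_distrib)
    then show ?thesis
      unfolding \<beta>_def by (simp add: algebra_simps)
  qed
  have "(\<Prod>k<Suc n. golden * x - \<beta> k) = golden ^ n * G * (golden * x - \<beta> n)"
    unfolding G_def by (simp add: shift_golden prod.distrib)
  moreover have "(\<Prod>k<Suc n. \<psi> * x - \<beta> k) = (\<psi> * x - \<beta> 0) * (\<psi> ^ n * G)"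
    unfolding prod.lessThan_Suc_shift shift_conj G_def by (simp add: prod.distrib)
  ultimately have "(\<Prod>k<Suc n. golden * x - \<beta> k) - (\<Prod>k<Suc n. \<psi> * x - \<beta> k) =
      G * (golden ^ Suc n * x - \<psi> ^ Suc n * x - golden ^ n * \<beta> n + \<psi> ^ n * \<beta> 0)"
    by (simp add: algebra_simps)
  also have "\<dots> = (golden ^ Suc n - \<psi> ^ Suc n) * x * G"
    unfolding last_factor first_factor by (simp add: algebra_simps)
  finally show ?thesis
    unfolding poly_golden_binom \<beta>_def \<gamma>_def G_def \<psi>_def .
qed

lemma golden_deriv_golden_binom:
  "golden_deriv (golden_binom a (Suc n)) = smult (GF (int (Suc n))) (golden_binom a n)"
proof -
  define f where "f = golden_binom a (Suc n)"
  have scale_nonzero: "golden + 1 / golden \<noteq> 0"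
    unfolding golden_plus_inverse by simp
  have "smult (golden + 1 / golden) (pCons 0 (golden_deriv f)) =
      f \<circ>\<^sub>p [:0, golden:] - f \<circ>\<^sub>p [:0, -1 / golden:]"
    by (rule golden_deriv_difference_quotient[symmetric])
  also have "\<dots> = smult (golden ^ Suc n - (-1 / golden) ^ Suc n) (pCons 0 (golden_binom a n))"
    unfolding f_def
    using poly_golden_binom_dilations[of a n] by (intro poly_ext) (simp add: poly_pcompose mult.commute)
  also have "\<dots> = smult (golden + 1 / golden) (pCons 0 (smult (GF (int (Suc n))) (golden_binom a n)))"
    unfolding GF_of_nat using scale_nonzero by simp
  finally have "pCons 0 (golden_deriv f) = pCons 0 (smult (GF (int (Suc n))) (golden_binom a n))"
    by (rule smult_cancel[OF scale_nonzero])
  then show ?thesis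
    unfolding f_def by simp
qed

lemma golden_poly_eq_smult_golden_binom: "golden_poly a n = smult (1 / GFfact n) (golden_binom a n)"
  by (cases "n = 0") (simp_all add: golden_poly_def golden_binom_def GFfact_def)

lemma golden_deriv_golden_poly:
  assumes "n \<ge> 1"
  shows "golden_deriv (golden_poly a n) = golden_poly a (n - 1)"
proof -
  obtain m where n: "n = Suc m"
    using assms by (cases n) auto
  have "GF (int (Suc m)) \<noteq> 0"
    using GF_pos[of "Suc m"] by simp
  then show ?thesis
    using GFfact_nonzero[of m]
    by (simp add: n golden_poly_eq_smult_golden_binom golden_deriv_smult golden_deriv_golden_binom
        GFfact_Suc field_simps)
qed

lemma prod_lessThan_double:
  fixes g :: "nat \<Rightarrow> 'a::comm_monoid_mult"
  shows "(\<Prod>k<2 * n. g k) = (\<Prod>k<n. g k * g (2 * n - 1 - k))"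
proof -
  have "(\<Prod>k<2 * n. g k) = (\<Prod>k<n. g k) * (\<Prod>k\<in>{n..<2 * n}. g k)"
    using prod.atLeastLessThan_concat[of 0 n "2 * n" g] by (simp add: atLeast0LessThan)
  also have "(\<Prod>k\<in>{n..<2 * n}. g k) = (\<Prod>k<n. g (2 * n - 1 - k))"
    by (rule prod.reindex_bij_witness[where i = "\<lambda>k. 2 * n - 1 - k" and j = "\<lambda>k. 2 * n - 1 - k"])
      auto
  finally show ?thesis
    by (simp add: prod.distrib)
qed

lemma prod_lessThan_double_Suc:
  fixes g :: "nat \<Rightarrow> 'a::comm_monoid_mult"
  shows "(\<Prod>k<2 * n + 1. g k) = g n * (\<Prod>k<n. g k * g (2 * n - k))"
proof -
  have "(\<Prod>k<2 * n + 1. g k) = (\<Prod>k<n. g k) * (\<Prod>k\<in>{n..<2 * n + 1}. g k)"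
    using prod.atLeastLessThan_concat[of 0 n "2 * n + 1" g] by (simp add: atLeast0LessThan)
  also have "(\<Prod>k\<in>{n..<2 * n + 1}. g k) = g n * (\<Prod>k\<in>{Suc n..<2 * n + 1}. g k)"
    by (rule prod.atLeast_Suc_lessThan) simp
  also have "(\<Prod>k\<in>{Suc n..<2 * n + 1}. g k) = (\<Prod>k<n. g (2 * n - k))"
    by (rule prod.reindex_bij_witness[where i = "\<lambda>k. 2 * n - k" and j = "\<lambda>k. 2 * n - k"]) auto
  finally show ?thesis
    by (simp only: prod.distrib ac_simps)
qed

lemma prod_lessThan_rev_atLeastAtMost:
  fixes g :: "nat \<Rightarrow> 'a::comm_monoid_mult"
  shows "(\<Prod>k<n. g (n - k)) = (\<Prod>k = 1..n. g k)"
  by (rule prod.reindex_bij_witness[where i = "\<lambda>k. n - k" and j = "\<lambda>k. n - k"]) auto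

lemma linear_factors_mult:
  fixes u v :: "'a::comm_ring_1"
  shows "[:- u, 1:] * [:- v, 1:] = [:u * v, - (u + v), 1:]"
  by (simp add: algebra_simps)

lemma golden_binom_even_factor_pair:
  assumes "k < n"
  shows "[:- ((-1) ^ k * golden powi (int (2 * n) - 1 - 2 * int k) * a), 1:] *
      [:- ((-1) ^ (2 * n - 1 - k) * golden powi (int (2 * n) - 1 - 2 * int (2 * n - 1 - k)) * a), 1:] =
    [:- (a ^ 2), - ((-1) ^ (n + (n - k)) * (GF (2 * int (n - k) - 1) + 2 * GF (2 * int (n - k) - 2)) * a), 1:]"
proof -
  define e where "e = 2 * int (n - k) - 1"
  define s :: real where "s = (-1) ^ k"
  have exponents: "int (2 * n) - 1 - 2 * int k = e" "int (2 * n) - 1 - 2 * int (2 * n - 1 - k) = - e"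
    "2 * int (n - k) - 2 = e - 1"
    unfolding e_def using assms by (simp_all add: of_nat_diff)
  have "even (2 * n - 1 - k) \<longleftrightarrow> odd k" "even (n + (n - k)) \<longleftrightarrow> even k"
    using assms by presburger+
  then have signs: "(-1) ^ (2 * n - 1 - k) = - s" "(-1) ^ (n + (n - k)) = s"
    unfolding s_def by (simp_all add: minus_one_power_iff)
  have "odd e"
    unfolding e_def by presburger
  then have lucas: "GF e + 2 * GF (e - 1) = golden powi e - golden powi (- e)"
    unfolding GF_plus_2_GF_pred golden_conj_powi by simp
  have "s * s = 1" "golden powi e * golden powi (- e) = 1"
    unfolding s_def using golden_nonzero by (simp_all add: power_int_minus)
  then have "(s * golden powi e * a) * (- s * golden powi (- e) * a) = - (a ^ 2)"
    by (simp add: algebra_simps power2_eq_square)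
  then show ?thesis
    unfolding exponents signs lucas s_def[symmetric] e_def[symmetric] linear_factors_mult
    by (simp add: algebra_simps)
qed

lemma golden_binom_odd_factor_pair:
  assumes "k < n"
  shows "[:- ((-1) ^ k * golden powi (int (2 * n + 1) - 1 - 2 * int k) * a), 1:] *
      [:- ((-1) ^ (2 * n - k) * golden powi (int (2 * n + 1) - 1 - 2 * int (2 * n - k)) * a), 1:] =
    [:a ^ 2, - ((-1) ^ (n + (n - k)) * (GF (2 * int (n - k)) + 2 * GF (2 * int (n - k) - 1)) * a), 1:]"
proof -
  define e where "e = 2 * int (n - k)"
  define s :: real where "s = (-1) ^ k"
  have exponents: "int (2 * n + 1) - 1 - 2 * int k = e" "int (2 * n + 1) - 1 - 2 * int (2 * n - k) = - e"
    unfolding e_def using assms by (simp_all add: of_nat_diff)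
  have "even (2 * n - k) \<longleftrightarrow> even k" "even (n + (n - k)) \<longleftrightarrow> even k"
    using assms by presburger+
  then have signs: "(-1) ^ (2 * n - k) = s" "(-1) ^ (n + (n - k)) = s"
    unfolding s_def by (simp_all add: minus_one_power_iff)
  have "even e"
    unfolding e_def by simp
  then have lucas: "GF e + 2 * GF (e - 1) = golden powi e + golden powi (- e)"
    unfolding GF_plus_2_GF_pred golden_conj_powi by simp
  have "s * s = 1" "golden powi e * golden powi (- e) = 1"
    unfolding s_def using golden_nonzero by (simp_all add: power_int_minus)
  then have "(s * golden powi e * a) * (s * golden powi (- e) * a) = a ^ 2"
    by (simp add: algebra_simps power2_eq_square)
  then show ?thesis
    unfolding exponents signs lucas s_def[symmetric] e_def[symmetric] linear_factors_mult
    by (simp add: algebra_simps)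
qed

lemma golden_binom_even:
  "golden_binom a (2 * n) =
    (\<Prod>k = 1..n. [:- (a ^ 2), - ((-1) ^ (n + k) * (GF (2 * int k - 1) + 2 * GF (2 * int k - 2)) * a), 1:])"
  unfolding golden_binom_def prod_lessThan_double prod_lessThan_rev_atLeastAtMost[symmetric]
  by (rule prod.cong[OF refl], rule golden_binom_even_factor_pair) simp

lemma golden_binom_odd:
  "golden_binom a (2 * n + 1) = [:- ((-1) ^ n * a), 1:] *
    (\<Prod>k = 1..n. [:a ^ 2, - ((-1) ^ (n + k) * (GF (2 * int k) + 2 * GF (2 * int k - 1)) * a), 1:])"
  unfolding golden_binom_def prod_lessThan_double_Suc prod_lessThan_rev_atLeastAtMost[symmetric]
  by (rule arg_cong2[where f = "(*)"], simp, rule prod.cong[OF refl], rule golden_binom_odd_factor_pair)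
    simp

theorem mainTheorem12:
  fixes a :: real
  shows "(\<forall>n\<ge>1. golden_deriv (golden_poly a n) = golden_poly a (n - 1))
    \<and> (\<forall>n\<ge>1. golden_poly a (2 * n) =
          smult (1 / GFfact (2 * n))
            (\<Prod>k = 1..n. [: - (a ^ 2),
                 - ((-1) ^ (n + k) * (GF (2 * int k - 1) + 2 * GF (2 * int k - 2)) * a), 1 :]))
    \<and> (\<forall>n. golden_poly a (2 * n + 1) =
          smult (1 / GFfact (2 * n + 1))
            ([: - ((-1) ^ n * a), 1 :] *
             (\<Prod>k = 1..n. [: a ^ 2,
                 - ((-1) ^ (n + k) * (GF (2 * int k) + 2 * GF (2 * int k - 1)) * a), 1 :])))"
  by (intro conjI allI impI golden_deriv_golden_poly)
    (simp_all only: golden_poly_eq_smult_golden_binom golden_binom_even golden_binom_odd)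

end
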